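(* Let $V_1,V_2:\mathbb{R}\to\mathbb{R}$ satisfy the assumptions (C1), (C2) below, let $k(x,y)=e^{-V_1(y)-V_2(y-x)}$, let $\lambda>0$ be the spectral radius of the integral operator $(\mathcal{K}f)(x)=\int_\mathbb{R} k(x,y)f(y)\,dy$ on $L^2(\mathbb{R})$, and let $v$ be a positive right eigenfunction, $v(x)=\lambda^{-1}\int_\mathbb{R} k(x,y)v(y)\,dy$ for all $x$. Let $p(x,y)=\frac{k(x,y)v(y)}{\lambda v(x)}$. For $a,b\in\mathbb{R}$, under a probability $\mathbf{P}^{(a,b)}$ let $(Y_n)_{n\ge0}$ be a Markov chain on $\mathbb{R}$ with $Y_0=a$ and transition kernel $p(x,y)\,dy$, and let $W_0=b$, $W_n=b+Y_1+\dots+Y_n$. Then for every $n\in\mathbb{N}$, setting $w_{-1}:=b-a$ and $w_0:=b$, $$\mathbf{P}^{(a,b)}\big((W_1,\dots,W_n)\in(dw_1,\dots,dw_n)\big)=\frac{v(w_n-w_{n-1})}{\lambda^n v(a)}\,e^{-\mathcal{H}_{[-1,n]}(w_{-1},\dots,w_n)}\prod_{i=1}^n dw_i,$$ where $\mathcal{H}_{[-1,n]}(w_{-1},\dots,w_n)=\sum_{i=1}^{n}V_1(w_i-w_{i-1})+\sum_{i=0}^{n-1}V_2(w_{i+1}+w_{i-1}-2w_i)$.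
   Context: Assumptions: (C1) $V_1$ measurable, bounded from below, symmetric, $\lim_{|x|\to\infty}V_1(x)=+\infty$, $\int e^{-2V_1}<\infty$; (C2) $V_2$ measurable, bounded from below, bounded above on $[-\gamma,\gamma]$ for some $\gamma>0$, $\int|x|e^{-V_2(x)}dx<\infty$. Under these assumptions $\mathcal{K}$ is Hilbert–Schmidt, its spectral radius $\lambda>0$ is an isolated eigenvalue with an eigenfunction $v\in L^2(\mathbb{R})$, $v>0$ everywhere (defined pointwise by the eigen-equation), so $p(x,\cdot)$ is a probability density for each $x$. *)

theory Defs
  imports "HOL-Probability.Probability"
begin

definition cond_C1 :: "(real \<Rightarrow> real) \<Rightarrow> bool" where
  "cond_C1 V1 \<longleftrightarrow>
     V1 \<in> borel_measurable borel \<and>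
     (\<exists>c. \<forall>x. c \<le> V1 x) \<and>
     (\<forall>x. V1 (- x) = V1 x) \<and>
     filterlim V1 at_top at_infinity \<and>
     integrable lborel (\<lambda>x. exp (- 2 * V1 x))"

definition cond_C2 :: "(real \<Rightarrow> real) \<Rightarrow> bool" where
  "cond_C2 V2 \<longleftrightarrow>
     V2 \<in> borel_measurable borel \<and>
     (\<exists>c. \<forall>x. c \<le> V2 x) \<and>
     (\<exists>\<gamma>>0. \<exists>C. \<forall>x\<in>{-\<gamma>..\<gamma>}. V2 x \<le> C) \<and>
     integrable lborel (\<lambda>x. \<bar>x\<bar> * exp (- V2 x))"

definition kern :: "(real \<Rightarrow> real) \<Rightarrow> (real \<Rightarrow> real) \<Rightarrow> real \<Rightarrow> real \<Rightarrow> real" where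
  "kern V1 V2 x y = exp (- V1 y - V2 (y - x))"

definition sq_int :: "(real \<Rightarrow> complex) \<Rightarrow> bool" where
  "sq_int f \<longleftrightarrow> f \<in> borel_measurable lborel \<and> integrable lborel (\<lambda>x. (cmod (f x))\<^sup>2)"

definition int_op :: "(real \<Rightarrow> real \<Rightarrow> real) \<Rightarrow> (real \<Rightarrow> complex) \<Rightarrow> real \<Rightarrow> complex" where
  "int_op k f x = (LINT y|lborel. complex_of_real (k x y) * f y)"

text \<open>Spectrum of the integral operator with kernel k on (complex) L2(R):
  the mu for which K - mu I is not bijective on L2 (functions identified a.e.).\<close>
definition L2_spectrum :: "(real \<Rightarrow> real \<Rightarrow> real) \<Rightarrow> complex set" where
  "L2_spectrum k = {\<mu>. \<not> (
      (\<forall>g. sq_int g \<longrightarrow> (\<exists>f. sq_int f \<and> (AE x in lborel. int_op k f x - \<mu> * f x = g x))) \<and>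
      (\<forall>f. sq_int f \<longrightarrow> (AE x in lborel. int_op k f x - \<mu> * f x = 0) \<longrightarrow> (AE x in lborel. f x = 0)))}"

definition L2_spectral_radius :: "(real \<Rightarrow> real \<Rightarrow> real) \<Rightarrow> real" where
  "L2_spectral_radius k = Sup (cmod ` L2_spectrum k)"

definition trans_dens :: "(real \<Rightarrow> real \<Rightarrow> real) \<Rightarrow> real \<Rightarrow> (real \<Rightarrow> real) \<Rightarrow> real \<Rightarrow> real \<Rightarrow> real" where
  "trans_dens k lam v x y = k x y * v y / (lam * v x)"

text \<open>Y is (under the probability M) a Markov chain on R started at a with transition
  kernel p(x,y) dy: Y 0 = a a.s., and for every n,
  P((Y_0..Y_n) in A, Y_{n+1} in B) = E[1_A(Y_0..Y_n) int_B p(Y_n,y) dy].\<close>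
definition markov_chain_dens :: "'s measure \<Rightarrow> (nat \<Rightarrow> 's \<Rightarrow> real) \<Rightarrow> real \<Rightarrow> (real \<Rightarrow> real \<Rightarrow> real) \<Rightarrow> bool" where
  "markov_chain_dens M Y a p \<longleftrightarrow>
     prob_space M \<and>
     (\<forall>n. Y n \<in> borel_measurable M) \<and>
     (AE \<omega> in M. Y 0 \<omega> = a) \<and>
     (\<forall>n A B. A \<in> sets (PiM {0..n} (\<lambda>_. lborel)) \<longrightarrow> B \<in> sets lborel \<longrightarrow>
        emeasure M {\<omega> \<in> space M. (\<lambda>i\<in>{0..n}. Y i \<omega>) \<in> A \<and> Y (Suc n) \<omega> \<in> B}
        = (\<integral>\<^sup>+ \<omega>. indicator A (\<lambda>i\<in>{0..n}. Y i \<omega>) *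
              (\<integral>\<^sup>+ y. indicator B y * ennreal (p (Y n \<omega>) y) \<partial>lborel) \<partial>M))"

definition ext_conf :: "real \<Rightarrow> real \<Rightarrow> (nat \<Rightarrow> real) \<Rightarrow> int \<Rightarrow> real" where
  "ext_conf a b w i = (if i = -1 then b - a else if i = 0 then b else w (nat i))"

definition hamil :: "(real \<Rightarrow> real) \<Rightarrow> (real \<Rightarrow> real) \<Rightarrow> nat \<Rightarrow> (int \<Rightarrow> real) \<Rightarrow> real" where
  "hamil V1 V2 n w =
     (\<Sum>i=1..int n. V1 (w i - w (i - 1))) +
     (\<Sum>i=0..int n - 1. V2 (w (i + 1) + w (i - 1) - 2 * w i))"

end

theory Submission
  imports Defs
begin

text \<open>By the Markov property W_{n+1} = W_n + Y_{n+1}, where given the past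
  Y_{n+1} has density p(Y_n, -), and Y_n = w_n - w_{n-1} (also for n = 0, because w_{-1} = b - a).
  Hence the density of (W_1, ..., W_{n+1}) is that of (W_1, ..., W_n) times
  p(w_n - w_{n-1}, w_{n+1} - w_n): the ratio of eigenfunction values telescopes, a factor 1/lam
  appears, and the kernel contributes exactly the two new terms
  V1(w_{n+1} - w_n) + V2(w_{n+1} + w_{n-1} - 2 w_n) of the Hamiltonian.\<close>

lemma measurable_component_PiM_any[measurable]:
  "(\<lambda>w. w j) \<in> borel_measurable (PiM I (\<lambda>_. lborel :: real measure))"
proof (cases "j \<in> I")
  case False
  have "(\<lambda>_. undefined) \<in> borel_measurable (PiM I (\<lambda>_. lborel :: real measure))" by simp
  then show ?thesis
    by (rule measurable_cong[THEN iffD1, rotated]) (use False in \<open>auto simp: space_PiM PiE_def extensional_def\<close>)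
qed measurable

definition chain_path :: "(nat \<Rightarrow> 's \<Rightarrow> real) \<Rightarrow> nat \<Rightarrow> 's \<Rightarrow> nat \<Rightarrow> real" where
  "chain_path Y N \<omega> = (\<lambda>i\<in>{0..N}. Y i \<omega>)"

lemma markov_chain_dens_measurable:
  "markov_chain_dens M Y a p \<Longrightarrow> Y i \<in> borel_measurable M"
  by (simp add: markov_chain_dens_def)

lemma markov_chain_dens_chain_path_measurable:
  assumes "markov_chain_dens M Y a p"
  shows "chain_path Y N \<in> M \<rightarrow>\<^sub>M PiM {0..N} (\<lambda>_. lborel)"
  using markov_chain_dens_measurable[OF assms] unfolding chain_path_def by measurable

lemma markov_chain_dens_distr_path_next:
  assumes MC: "markov_chain_dens M Y a p"
    and p_meas[measurable]: "case_prod p \<in> borel_measurable (borel \<Otimes>\<^sub>M borel)"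
  shows "distr M (PiM {0..N} (\<lambda>_. lborel) \<Otimes>\<^sub>M lborel) (\<lambda>\<omega>. (chain_path Y N \<omega>, Y (Suc N) \<omega>))
    = density (distr M (PiM {0..N} (\<lambda>_. lborel)) (chain_path Y N) \<Otimes>\<^sub>M lborel) (\<lambda>(z, y). ennreal (p (z N) y))"
  (is "?L1 = ?L2")
proof -
  let ?P = "PiM {0..N} (\<lambda>_. lborel::real measure)"
  let ?Q = "distr M ?P (chain_path Y N)"
  let ?E = "{A \<times> B | A B. A \<in> sets ?P \<and> B \<in> sets (lborel::real measure)}"
  let ?\<Omega> = "space ?P \<times> space (lborel::real measure)"
  interpret prob_space M using MC by (simp add: markov_chain_dens_def)
  note [measurable] = markov_chain_dens_measurable[OF MC] markov_chain_dens_chain_path_measurable[OF MC]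
  interpret L1: prob_space ?L1 by (rule prob_space_distr) measurable
  show ?thesis
  proof (rule measure_eqI_generator_eq[where E="?E" and \<Omega>="?\<Omega>" and A="\<lambda>_. ?\<Omega>"])
    show "Int_stable ?E" by (rule Int_stable_pair_measure_generator)
    show "?E \<subseteq> Pow ?\<Omega>" by (rule pair_measure_closed)
    show "sets ?L1 = sigma_sets ?\<Omega> ?E" "sets ?L2 = sigma_sets ?\<Omega> ?E"
      by (simp_all add: sets_pair_measure)
    show "range (\<lambda>_. ?\<Omega>) \<subseteq> ?E"
      using sets.top[of ?P] sets.top[of "lborel::real measure"] by blast
    show "(\<Union>i. ?\<Omega>) = ?\<Omega>" "emeasure ?L1 ?\<Omega> \<noteq> \<infinity>" by simp_all
    fix X assume "X \<in> ?E"
    then obtain A B where X: "X = A \<times> B" and A[measurable]: "A \<in> sets ?P"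
      and B[measurable]: "B \<in> sets (lborel::real measure)"
      by auto
    have "emeasure ?L1 X = emeasure M {\<omega> \<in> space M. chain_path Y N \<omega> \<in> A \<and> Y (Suc N) \<omega> \<in> B}"
      unfolding X using A B by (subst emeasure_distr) (auto intro!: arg_cong2[where f=emeasure])
    also have "\<dots> = (\<integral>\<^sup>+ \<omega>. indicator A (chain_path Y N \<omega>) *
        (\<integral>\<^sup>+ y. indicator B y * ennreal (p (Y N \<omega>) y) \<partial>lborel) \<partial>M)"
      using MC A B unfolding markov_chain_dens_def chain_path_def by blast
    also have "\<dots> = (\<integral>\<^sup>+ z. indicator A z * (\<integral>\<^sup>+ y. indicator B y * ennreal (p (z N) y) \<partial>lborel) \<partial>?Q)"
      by (subst nn_integral_distr) (auto simp: chain_path_def)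
    also have "\<dots> = (\<integral>\<^sup>+ z. (\<integral>\<^sup>+ y. ennreal (p (z N) y) * indicator X (z, y) \<partial>lborel) \<partial>?Q)"
      by (auto simp: X nn_integral_cmult[symmetric] intro!: nn_integral_cong split: split_indicator)
    also have "\<dots> = (\<integral>\<^sup>+ x. (case x of (z, y) \<Rightarrow> ennreal (p (z N) y)) * indicator X x \<partial>(?Q \<Otimes>\<^sub>M lborel))"
      by (subst sigma_finite_measure.nn_integral_fst[OF sigma_finite_lborel, symmetric]) (auto simp: X)
    also have "\<dots> = emeasure ?L2 X"
      using A B by (subst emeasure_density) (auto simp: X)
    finally show "emeasure ?L1 X = emeasure ?L2 X" .
  qed
qed

lemma markov_chain_dens_nn_integral_next:
  assumes MC: "markov_chain_dens M Y a p"
    and p_meas[measurable]: "case_prod p \<in> borel_measurable (borel \<Otimes>\<^sub>M borel)"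
    and f[measurable]: "f \<in> borel_measurable (PiM {0..N} (\<lambda>_. lborel) \<Otimes>\<^sub>M lborel)"
  shows "(\<integral>\<^sup>+ \<omega>. f (chain_path Y N \<omega>, Y (Suc N) \<omega>) \<partial>M)
    = (\<integral>\<^sup>+ \<omega>. \<integral>\<^sup>+ y. ennreal (p (Y N \<omega>) y) * f (chain_path Y N \<omega>, y) \<partial>lborel \<partial>M)"
proof -
  let ?P = "PiM {0..N} (\<lambda>_. lborel::real measure)"
  let ?Q = "distr M ?P (chain_path Y N)"
  note [measurable] = markov_chain_dens_measurable[OF MC] markov_chain_dens_chain_path_measurable[OF MC]
  have "(\<integral>\<^sup>+ \<omega>. f (chain_path Y N \<omega>, Y (Suc N) \<omega>) \<partial>M)
      = (\<integral>\<^sup>+ x. f x \<partial>distr M (?P \<Otimes>\<^sub>M lborel) (\<lambda>\<omega>. (chain_path Y N \<omega>, Y (Suc N) \<omega>)))"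
    by (subst nn_integral_distr) auto
  also have "\<dots> = (\<integral>\<^sup>+ x. (case x of (z, y) \<Rightarrow> ennreal (p (z N) y)) * f x \<partial>(?Q \<Otimes>\<^sub>M lborel))"
    by (simp add: markov_chain_dens_distr_path_next[OF MC p_meas] nn_integral_density)
  also have "\<dots> = (\<integral>\<^sup>+ z. \<integral>\<^sup>+ y. ennreal (p (z N) y) * f (z, y) \<partial>lborel \<partial>?Q)"
    by (subst sigma_finite_measure.nn_integral_fst[OF sigma_finite_lborel, symmetric]) auto
  also have "\<dots> = (\<integral>\<^sup>+ \<omega>. \<integral>\<^sup>+ y. ennreal (p (Y N \<omega>) y) * f (chain_path Y N \<omega>, y) \<partial>lborel \<partial>M)"
    by (subst nn_integral_distr) (auto simp: chain_path_def)
  finally show ?thesis .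
qed

lemma ext_conf_fun_upd_le:
  "i \<le> int N \<Longrightarrow> ext_conf a b (w(Suc N := u)) i = ext_conf a b w i"
  by (auto simp: ext_conf_def)

lemma ext_conf_fun_upd_Suc:
  "ext_conf a b (w(Suc N := u)) (int N + 1) = u"
  by (auto simp: ext_conf_def nat_int_add)

lemma hamil_fun_upd_Suc:
  "hamil V1 V2 (Suc N) (ext_conf a b (w(Suc N := u))) =
   hamil V1 V2 N (ext_conf a b w) + V1 (u - ext_conf a b w (int N))
     + V2 (u + ext_conf a b w (int N - 1) - 2 * ext_conf a b w (int N))"
proof -
  have "{1..int (Suc N)} = insert (int N + 1) {1..int N}" "{0..int (Suc N) - 1} = insert (int N) {0..int N - 1}"
    by auto
  then show ?thesis
    unfolding hamil_def by (simp add: ext_conf_fun_upd_le ext_conf_fun_upd_Suc)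
qed

lemma ext_conf_measurable[measurable]:
  "(\<lambda>w. ext_conf a b w i) \<in> borel_measurable (PiM I (\<lambda>_. lborel::real measure))"
  unfolding ext_conf_def by measurable

lemma hamil_measurable[measurable]:
  assumes [measurable]: "V1 \<in> borel_measurable borel" "V2 \<in> borel_measurable borel"
  shows "(\<lambda>w. hamil V1 V2 n (ext_conf a b w)) \<in> borel_measurable (PiM I (\<lambda>_. lborel::real measure))"
  unfolding hamil_def by measurable

locale hamiltonian_walk =
  fixes V1 V2 :: "real \<Rightarrow> real" and lam :: real and v :: "real \<Rightarrow> real"
    and M :: "'s measure" and Y :: "nat \<Rightarrow> 's \<Rightarrow> real" and a b :: real
  assumes V1_measurable[measurable]: "V1 \<in> borel_measurable borel"
    and V2_measurable[measurable]: "V2 \<in> borel_measurable borel"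
    and v_measurable[measurable]: "v \<in> borel_measurable borel"
    and lam_pos: "lam > 0" and v_pos: "\<And>x. v x > 0"
    and markov_chain: "markov_chain_dens M Y a (trans_dens (kern V1 V2) lam v)"
begin

abbreviation "p \<equiv> trans_dens (kern V1 V2) lam v"

definition partial_sums :: "nat \<Rightarrow> (nat \<Rightarrow> real) \<Rightarrow> nat \<Rightarrow> real" where
  "partial_sums N z = (\<lambda>i\<in>{1..N}. b + (\<Sum>j=1..i. z j))"

abbreviation walk :: "nat \<Rightarrow> 's \<Rightarrow> nat \<Rightarrow> real" where
  "walk N \<omega> \<equiv> partial_sums N (\<lambda>j. Y j \<omega>)"

text \<open>For N = 0 this is w_0 - w_{-1} = a, the starting point of the chain.\<close>

definition last_increment :: "nat \<Rightarrow> (nat \<Rightarrow> real) \<Rightarrow> real" where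
  "last_increment N w = ext_conf a b w (int N) - ext_conf a b w (int N - 1)"

definition walk_density :: "nat \<Rightarrow> (nat \<Rightarrow> real) \<Rightarrow> ennreal" where
  "walk_density N w =
     ennreal (v (last_increment N w) / (lam ^ N * v a) * exp (- hamil V1 V2 N (ext_conf a b w)))"

definition snoc_increment :: "nat \<Rightarrow> (nat \<Rightarrow> real) \<Rightarrow> real \<Rightarrow> nat \<Rightarrow> real" where
  "snoc_increment N w y = (\<lambda>i\<in>{1..Suc N}. if i = Suc N then ext_conf a b w (int N) + y else w i)"

lemma trans_dens_measurable[measurable]: "case_prod p \<in> borel_measurable (borel \<Otimes>\<^sub>M borel)"
  unfolding trans_dens_def kern_def by measurable

lemma Y_measurable[measurable]: "Y i \<in> borel_measurable M"
  by (rule markov_chain_dens_measurable[OF markov_chain])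

lemma partial_sums_measurable[measurable]:
  "partial_sums N \<in> PiM I (\<lambda>_. lborel) \<rightarrow>\<^sub>M PiM {1..N} (\<lambda>_. lborel)"
  unfolding partial_sums_def by measurable

lemma walk_measurable[measurable]: "(\<lambda>\<omega>. walk N \<omega>) \<in> M \<rightarrow>\<^sub>M PiM {1..N} (\<lambda>_. lborel)"
  unfolding partial_sums_def by measurable

lemma last_increment_measurable[measurable]: "last_increment N \<in> borel_measurable (PiM I (\<lambda>_. lborel))"
  unfolding last_increment_def by measurable

lemma walk_density_measurable[measurable]: "walk_density N \<in> borel_measurable (PiM I (\<lambda>_. lborel))"
  unfolding walk_density_def by measurable

lemma snoc_increment_measurable[measurable]:
  "case_prod (snoc_increment N) \<in> PiM {1..N} (\<lambda>_. lborel) \<Otimes>\<^sub>M lborel \<rightarrow>\<^sub>M PiM {1..Suc N} (\<lambda>_. lborel)"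
  unfolding snoc_increment_def split_beta'
proof (rule measurable_restrict)
  fix i assume "i \<in> {1..Suc N}"
  show "(\<lambda>x. if i = Suc N then ext_conf a b (fst x) (int N) + snd x else fst x i)
      \<in> PiM {1..N} (\<lambda>_. lborel) \<Otimes>\<^sub>M lborel \<rightarrow>\<^sub>M lborel"
    by (cases "i = Suc N") simp_all
qed

lemma partial_sums_Suc: "partial_sums (Suc N) z = snoc_increment N (partial_sums N z) (z (Suc N))"
proof -
  have "ext_conf a b (partial_sums N z) (int N) = b + (\<Sum>j=1..N. z j)"
    by (cases N) (auto simp: ext_conf_def partial_sums_def nat_int_add[of 1, simplified])
  then show ?thesis
    by (auto simp: partial_sums_def snoc_increment_def fun_eq_iff)
qed

lemma partial_sums_chain_path: "partial_sums N (chain_path Y N \<omega>) = walk N \<omega>"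
  by (auto simp: partial_sums_def chain_path_def fun_eq_iff intro!: sum.cong)

lemma last_increment_partial_sums: "z 0 = a \<Longrightarrow> last_increment N (partial_sums N z) = z N"
  by (cases N) (auto simp: last_increment_def ext_conf_def partial_sums_def nat_int_add[of 1, simplified])

lemma snoc_increment_eq_fun_upd:
  "w \<in> space (PiM {1..N} (\<lambda>_. lborel)) \<Longrightarrow> snoc_increment N w y = w(Suc N := ext_conf a b w (int N) + y)"
  by (auto simp: snoc_increment_def space_PiM PiE_def extensional_def fun_eq_iff)


lemma walk_density_fun_upd:
  "walk_density N w * ennreal (p (last_increment N w) (u - ext_conf a b w (int N)))
     = walk_density (Suc N) (w(Suc N := u))"
proof -
  let ?e = "ext_conf a b w" and ?d = "last_increment N w"
  have top: "ext_conf a b (w(Suc N := u)) (int (Suc N)) = u"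
    using ext_conf_fun_upd_Suc[of a b w N u] by (simp add: add.commute)
  have below: "ext_conf a b (w(Suc N := u)) (int (Suc N) - 1) = ?e (int N)"
    by (simp add: ext_conf_fun_upd_le)
  have pos: "v ?d > 0" "v a > 0" "v (u - ?e (int N)) > 0"
    using v_pos by auto
  have "walk_density N w * ennreal (p ?d (u - ?e (int N))) =
     ennreal (v ?d / (lam ^ N * v a) * exp (- hamil V1 V2 N ?e) *
       (exp (- V1 (u - ?e (int N)) - V2 (u - ?e (int N) - ?d)) * v (u - ?e (int N)) / (lam * v ?d)))"
    unfolding walk_density_def trans_dens_def kern_def
    using pos lam_pos by (subst ennreal_mult[symmetric]) auto
  also have "\<dots> = walk_density (Suc N) (w(Suc N := u))"
    unfolding walk_density_def last_increment_def top below hamil_fun_upd_Suc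
    using pos lam_pos by (simp add: last_increment_def exp_diff exp_add field_simps exp_minus_inverse)
  finally show ?thesis .
qed

lemma nn_integral_walk_Suc:
  assumes f[measurable]: "f \<in> borel_measurable (PiM {1..Suc N} (\<lambda>_. lborel))"
  shows "(\<integral>\<^sup>+ \<omega>. f (walk (Suc N) \<omega>) \<partial>M) = (\<integral>\<^sup>+ \<omega>. \<integral>\<^sup>+ y.
      ennreal (p (last_increment N (walk N \<omega>)) y) * f (snoc_increment N (walk N \<omega>) y) \<partial>lborel \<partial>M)"
proof -
  let ?g = "\<lambda>x. f (snoc_increment N (partial_sums N (fst x)) (snd x))"
  have "?g \<in> borel_measurable (PiM {0..N} (\<lambda>_. lborel) \<Otimes>\<^sub>M lborel)"
    by measurable
  note markov_step = markov_chain_dens_nn_integral_next[OF markov_chain trans_dens_measurable this]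
  have "(\<integral>\<^sup>+ \<omega>. f (walk (Suc N) \<omega>) \<partial>M)
      = (\<integral>\<^sup>+ \<omega>. f (snoc_increment N (partial_sums N (chain_path Y N \<omega>)) (Y (Suc N) \<omega>)) \<partial>M)"
    by (simp add: partial_sums_Suc partial_sums_chain_path)
  also have "\<dots> = (\<integral>\<^sup>+ \<omega>. \<integral>\<^sup>+ y.
      ennreal (p (Y N \<omega>) y) * f (snoc_increment N (walk N \<omega>) y) \<partial>lborel \<partial>M)"
    using markov_step by (simp add: partial_sums_chain_path)
  also have "\<dots> = (\<integral>\<^sup>+ \<omega>. \<integral>\<^sup>+ y.
      ennreal (p (last_increment N (walk N \<omega>)) y) * f (snoc_increment N (walk N \<omega>) y) \<partial>lborel \<partial>M)"
  proof (rule nn_integral_cong_AE)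
    show "AE \<omega> in M. (\<integral>\<^sup>+ y. ennreal (p (Y N \<omega>) y) * f (snoc_increment N (walk N \<omega>) y) \<partial>lborel)
      = (\<integral>\<^sup>+ y. ennreal (p (last_increment N (walk N \<omega>)) y) * f (snoc_increment N (walk N \<omega>) y) \<partial>lborel)"
      using markov_chain unfolding markov_chain_dens_def
      by (auto elim!: AE_mp simp: last_increment_partial_sums)
  qed
  finally show ?thesis .
qed

lemma walk_density_nn_integral_snoc:
  assumes w: "w \<in> space (PiM {1..N} (\<lambda>_. lborel))"
    and f[measurable]: "f \<in> borel_measurable (PiM {1..Suc N} (\<lambda>_. lborel))"
  shows "walk_density N w * (\<integral>\<^sup>+ y. ennreal (p (last_increment N w) y) * f (snoc_increment N w y) \<partial>lborel)
    = (\<integral>\<^sup>+ u. walk_density (Suc N) (w(Suc N := u)) * f (w(Suc N := u)) \<partial>lborel)"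
proof -
  let ?e = "ext_conf a b w (int N)"
  have "(\<lambda>u. snoc_increment N w (u - ?e)) \<in> lborel \<rightarrow>\<^sub>M PiM {1..Suc N} (\<lambda>_. lborel)"
    using w by measurable
  then have [measurable]: "(\<lambda>u. w(Suc N := u)) \<in> lborel \<rightarrow>\<^sub>M PiM {1..Suc N} (\<lambda>_. lborel)"
    by (simp add: snoc_increment_eq_fun_upd[OF w])
  have f_upd: "(\<lambda>u. f (w(Suc N := u))) \<in> borel_measurable borel"
    by measurable
  have p_shift: "(\<lambda>u. ennreal (p (last_increment N w) (u - ?e))) \<in> borel_measurable borel"
    by measurable
  have "(\<integral>\<^sup>+ y. ennreal (p (last_increment N w) y) * f (snoc_increment N w y) \<partial>lborel)
      = (\<integral>\<^sup>+ y. ennreal (p (last_increment N w) ((?e + y) - ?e)) * f (w(Suc N := ?e + y)) \<partial>lborel)"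
    by (simp add: snoc_increment_eq_fun_upd[OF w])
  also have "\<dots> = (\<integral>\<^sup>+ u. ennreal (p (last_increment N w) (u - ?e)) * f (w(Suc N := u)) \<partial>lborel)"
    using nn_integral_real_affine[of "\<lambda>u. ennreal (p (last_increment N w) (u - ?e)) * f (w(Suc N := u))" 1 ?e]
      p_shift f_upd by simp
  finally show ?thesis
    using p_shift f_upd
    by (simp add: nn_integral_cmult[symmetric] mult.assoc[symmetric] walk_density_fun_upd)
qed

lemma distr_walk_0: "distr M (PiM {1..0} (\<lambda>_. lborel)) (walk 0) = density (PiM {1..0} (\<lambda>_. lborel)) (walk_density 0)"
proof -
  interpret prob_space M using markov_chain by (simp add: markov_chain_dens_def)
  have "walk_density 0 = (\<lambda>_. 1)"
    using v_pos[of a] by (auto simp: walk_density_def last_increment_def ext_conf_def hamil_def fun_eq_iff)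
  moreover have "walk 0 = (\<lambda>_. \<lambda>_. undefined)"
    by (auto simp: partial_sums_def fun_eq_iff)
  moreover have "density (count_space {x}) (indicator {x}) = count_space {x}" for x :: "nat \<Rightarrow> real"
    by (subst density_1[symmetric]) (rule density_cong, auto)
  ultimately show ?thesis
    by (simp add: PiM_empty return_count_space_eq_density density_1)
qed

lemma distr_walk:
  "distr M (PiM {1..N} (\<lambda>_. lborel)) (walk N) = density (PiM {1..N} (\<lambda>_. lborel)) (walk_density N)"
proof (induction N)
  case 0
  show ?case by (rule distr_walk_0)
next
  case (Suc N)
  let ?PN = "PiM {1..N} (\<lambda>_. lborel::real measure)" and ?PS = "PiM {1..Suc N} (\<lambda>_. lborel::real measure)"
  show ?case
  proof (rule measure_eqI)
    fix C assume "C \<in> sets (distr M ?PS (walk (Suc N)))"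
    then have C[measurable]: "C \<in> sets ?PS" by simp
    define G where "G w = (\<integral>\<^sup>+ y. ennreal (p (last_increment N w) y) * indicator C (snoc_increment N w y) \<partial>lborel)"
      for w
    have [measurable]: "G \<in> borel_measurable ?PN"
      unfolding G_def by measurable
    have "emeasure (distr M ?PS (walk (Suc N))) C = (\<integral>\<^sup>+ w. indicator C w \<partial>distr M ?PS (walk (Suc N)))"
      using C by simp
    also have "\<dots> = (\<integral>\<^sup>+ \<omega>. indicator C (walk (Suc N) \<omega>) \<partial>M)"
      by (rule nn_integral_distr) measurable
    also have "\<dots> = (\<integral>\<^sup>+ \<omega>. G (walk N \<omega>) \<partial>M)"
      unfolding G_def by (rule nn_integral_walk_Suc) measurable
    also have "\<dots> = (\<integral>\<^sup>+ w. G w \<partial>distr M ?PN (walk N))"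
      by (rule nn_integral_distr[symmetric]) measurable
    also have "\<dots> = (\<integral>\<^sup>+ w. walk_density N w * G w \<partial>?PN)"
      unfolding Suc.IH by (rule nn_integral_density) measurable
    also have "\<dots> = (\<integral>\<^sup>+ w. \<integral>\<^sup>+ u. walk_density (Suc N) (w(Suc N := u)) * indicator C (w(Suc N := u)) \<partial>lborel \<partial>?PN)"
      unfolding G_def using C by (intro nn_integral_cong walk_density_nn_integral_snoc) auto
    also have "\<dots> = (\<integral>\<^sup>+ w. walk_density (Suc N) w * indicator C w \<partial>?PS)"
    proof -
      have ps: "product_sigma_finite (\<lambda>_. lborel::real measure)"
        by (simp add: product_sigma_finite_def sigma_finite_lborel)
      have ins: "{1..Suc N} = insert (Suc N) {1..N}"
        by auto
      have "(\<lambda>w. walk_density (Suc N) w * indicator C w) \<in> borel_measurable ?PS"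
        by measurable
      from product_sigma_finite.product_nn_integral_insert[OF ps _ _ this[unfolded ins]]
      show ?thesis
        unfolding ins by simp
    qed
    also have "\<dots> = emeasure (density ?PS (walk_density (Suc N))) C"
      by (rule emeasure_density[symmetric]) measurable
    finally show "emeasure (distr M ?PS (walk (Suc N))) C = emeasure (density ?PS (walk_density (Suc N))) C" .
  qed simp
qed

end

theorem proposition2p1:
  fixes V1 V2 :: "real \<Rightarrow> real" and lam :: real and v :: "real \<Rightarrow> real"
    and M :: "'s measure" and Y :: "nat \<Rightarrow> 's \<Rightarrow> real" and a b :: real and n :: nat
  assumes C1: "cond_C1 V1"
    and C2: "cond_C2 V2"
    and lam: "lam = L2_spectral_radius (kern V1 V2)" "lam > 0"
    and v_L2: "v \<in> borel_measurable lborel" "integrable lborel (\<lambda>x. (v x)\<^sup>2)"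
    and v_pos: "\<forall>x. v x > 0"
    and v_eig: "\<forall>x. v x = (1 / lam) * (LINT y|lborel. kern V1 V2 x y * v y)"
    and MC: "markov_chain_dens M Y a (trans_dens (kern V1 V2) lam v)"
  shows "distr M (PiM {1..n} (\<lambda>_. lborel)) (\<lambda>\<omega>. \<lambda>i\<in>{1..n}. b + (\<Sum>j=1..i. Y j \<omega>))
       = density (PiM {1..n} (\<lambda>_. lborel))
           (\<lambda>w. ennreal (v (ext_conf a b w (int n) - ext_conf a b w (int n - 1)) / (lam ^ n * v a)
                   * exp (- hamil V1 V2 n (ext_conf a b w))))"
proof -
  interpret hamiltonian_walk V1 V2 lam v M Y a b
  proof
    show "V1 \<in> borel_measurable borel" "V2 \<in> borel_measurable borel"
      using C1 C2 by (simp_all add: cond_C1_def cond_C2_def)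
  qed (use v_L2 lam v_pos MC in simp_all)
  show ?thesis
    using distr_walk[of n] unfolding partial_sums_def walk_density_def last_increment_def .
qed

end
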